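(* Let $\epsilon\in(0,1)$ be sufficiently small and consider a single buyer. Even with exact targeted queries (i.e., $\Delta=0$), every (possibly randomized) algorithm that outputs an auction $M$ must use: (1) $\Omega(\log\epsilon^{-1})$ targeted queries to guarantee $\mathbf E[\mathrm{Rev}(M,D)]\ge(1-\epsilon)\mathrm{OPT}(D)$ for every regular $D$; (2) $\Omega(\epsilon^{-1})$ targeted queries to guarantee $\mathbf E[\mathrm{Rev}(M,D)]\ge\mathrm{OPT}(D)-\epsilon$ for every $[0,1]$-bounded $D$; (3) $\Omega(\epsilon^{-1}\log H)$ targeted queries to guarantee $\mathbf E[\mathrm{Rev}(M,D)]\ge(1-\epsilon)\mathrm{OPT}(D)$ for every $[1,H]$-bounded $D$. Here the expectation is over the algorithm's randomness.
   Context: Single buyer with value $v\sim D$ on $[0,\infty)$; $\mathrm{OPT}(D)$ is the maximum expected revenue over DSIC, IR mechanisms (best posted price). Quantile $q^D(v)=\Pr_{x\sim D}[x\ge v]$; value at quantile $v^D(q)=\sup\{v\ge0:q^D(v)\ge q\}$; a targeted query $q\in(0,1]$ returns $v^D(q)$; queries may be chosen adaptively. Regular: revenue curve $R(q)=q\,v^D(q)$ concave (equivalently nondecreasing virtual value); $[1,H]$-bounded / $[0,1]$-bounded: support contained in $[1,H]$ / $[0,1]$. *)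

theory Defs
  imports "HOL-Probability.Probability"
begin

definition val_dist :: "real measure \<Rightarrow> bool" where
  "val_dist D \<longleftrightarrow> prob_space D \<and> sets D = sets borel \<and> measure D {0..} = 1"

definition quantile :: "real measure \<Rightarrow> real \<Rightarrow> real" where
  "quantile D v = measure D {v..}"

text \<open>Value at quantile: v^D(q) = sup {v >= 0. q^D(v) >= q}; this is the
  answer to a targeted query q in (0,1].\<close>
definition value_at :: "real measure \<Rightarrow> real \<Rightarrow> real" where
  "value_at D q = Sup {v. 0 \<le> v \<and> quantile D v \<ge> q}"

definition rev_curve :: "real measure \<Rightarrow> real \<Rightarrow> real" where
  "rev_curve D q = q * value_at D q"

definition regular_dist :: "real measure \<Rightarrow> bool" where
  "regular_dist D \<longleftrightarrow> val_dist D \<and> concave_on {0<..1} (rev_curve D)"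

definition bounded_dist :: "real \<Rightarrow> real \<Rightarrow> real measure \<Rightarrow> bool" where
  "bounded_dist a b D \<longleftrightarrow> val_dist D \<and> measure D {a..b} = 1"

definition rev_price :: "real measure \<Rightarrow> real \<Rightarrow> real" where
  "rev_price D p = p * quantile D p"

definition OPT :: "real measure \<Rightarrow> real" where
  "OPT D = (SUP p\<in>{0..}. rev_price D p)"

text \<open>Randomized adaptive query algorithm: random seed omega drawn from the
  probability space P; Qry omega as is the next targeted query given the
  answers as received so far; Out omega as is the price output after all
  queries.\<close>
definition rand_alg :: "real measure \<Rightarrow> (real \<Rightarrow> real list \<Rightarrow> real) \<Rightarrow> bool" where
  "rand_alg P Qry \<longleftrightarrow> prob_space P \<and> (\<forall>\<omega> as. Qry \<omega> as \<in> {0<..1})"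

fun answers :: "(real \<Rightarrow> real list \<Rightarrow> real) \<Rightarrow> real measure \<Rightarrow> real \<Rightarrow> nat \<Rightarrow> real list" where
  "answers Qry D \<omega> 0 = []"
| "answers Qry D \<omega> (Suc n) =
     (let as = answers Qry D \<omega> n in as @ [value_at D (Qry \<omega> as)])"

definition exp_rev ::
  "real measure \<Rightarrow> (real \<Rightarrow> real list \<Rightarrow> real) \<Rightarrow> (real \<Rightarrow> real list \<Rightarrow> real) \<Rightarrow> nat \<Rightarrow> real measure \<Rightarrow> ennreal" where
  "exp_rev P Qry Out k D = (\<integral>\<^sup>+ \<omega>. ennreal (rev_price D (Out \<omega> (answers Qry D \<omega> k))) \<partial>P)"

end

(* By Yao's principle, an algorithm that is good in expectation on every member of a
   finite family of distributions has, for some fixed random seed, a deterministic run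
   that is good on average over the family.  So it suffices to exhibit families on
   which one run of k exact queries can be nearly optimal for only few members.

   For [0,1]- and [1,H]-bounded distributions, take m (about 1/eps, resp. log H / eps)
   distributions with the same constant revenue r on a geometric grid of values, each
   raised to r + Theta(eps r) on a quantile window of its own.  A query detects at
   most one of these bumps and a posted price profits from at most one, so the run is
   nearly optimal on at most k + 1 members, forcing k = Omega(m).

   For regular distributions, take 2^n distributions indexed by the leaves of a binary
   tree of depth n (about log(1/eps) / 3): the revenue curve of leaf i is the minimum
   of tents, with geometrically decreasing slopes, over the dyadic intervals on the
   path to i, so it peaks exactly on the leaf interval and is concave.  An answer to
   a query q only depends on the path down to the first node whose interval is far
   from q; hence every query refines a cylinder of leaves with common answers into at
   most one subcylinder at its own depth and four at each deeper one.  After k queries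
   the output price earns more than 1 - 2 eps on at most 2 * 9^k * (3/2)^n leaves, forcing
   (4/3)^n <= 4 * 9^k, i.e. k = Omega(log(1/eps)). *)

theory Submission
  imports Defs
begin

section \<open>Yao's averaging principle\<close>

text \<open>The algorithm is not assumed measurable, so only superadditivity of the lower
  integral is available.\<close>
lemma nn_integral_superadditive:
  "integral\<^sup>N M f + integral\<^sup>N M g \<le> (\<integral>\<^sup>+ x. f x + g x \<partial>M)"
proof -
  have simple: "integral\<^sup>S M a + integral\<^sup>S M b \<le> (\<integral>\<^sup>+ x. f x + g x \<partial>M)"
    if a: "simple_function M a" "a \<le> f" and b: "simple_function M b" "b \<le> g" for a b
  proof -
    have "integral\<^sup>S M a + integral\<^sup>S M b = (\<integral>\<^sup>+ x. a x + b x \<partial>M)"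
      using a b by (simp add: simple_integral_add nn_integral_eq_simple_integral simple_function_add)
    also have "\<dots> \<le> (\<integral>\<^sup>+ x. f x + g x \<partial>M)"
      using a b by (intro nn_integral_mono) (auto simp: le_fun_def intro: add_mono)
    finally show ?thesis .
  qed
  have nonempty: "{a. simple_function M a \<and> a \<le> h} \<noteq> {}" for h :: "_ \<Rightarrow> ennreal"
    by (auto intro!: exI[of _ "\<lambda>_. 0"] simp: le_fun_def)
  let ?A = "{a. simple_function M a \<and> a \<le> f}" and ?B = "{b. simple_function M b \<and> b \<le> g}"
  have "(SUP a\<in>?A. integral\<^sup>S M a) + (SUP b\<in>?B. integral\<^sup>S M b)
      = (SUP a\<in>?A. SUP b\<in>?B. integral\<^sup>S M a + integral\<^sup>S M b)"
    by (simp add: ennreal_SUP_add_left[symmetric, OF nonempty] ennreal_SUP_add_right[OF nonempty])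
      (rule SUP_commute)
  also have "\<dots> \<le> (\<integral>\<^sup>+ x. f x + g x \<partial>M)"
    using simple by (intro SUP_least) auto
  finally show ?thesis
    unfolding nn_integral_def[of M f] nn_integral_def[of M g] .
qed

lemma nn_integral_sum_superadditive:
  assumes "finite I"
  shows "(\<Sum>i\<in>I. integral\<^sup>N M (f i)) \<le> (\<integral>\<^sup>+ x. (\<Sum>i\<in>I. f i x) \<partial>M)"
  using assms
proof (induction I rule: finite_induct)
  case (insert j I)
  have "(\<Sum>i\<in>insert j I. integral\<^sup>N M (f i)) \<le> integral\<^sup>N M (f j) + (\<integral>\<^sup>+ x. (\<Sum>i\<in>I. f i x) \<partial>M)"
    using insert by (simp add: add_left_mono)
  also have "\<dots> \<le> (\<integral>\<^sup>+ x. (\<Sum>i\<in>insert j I. f i x) \<partial>M)"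
    using nn_integral_superadditive insert by simp
  finally show ?case .
qed simp

lemma yao_averaging:
  assumes P: "prob_space P" and I: "finite I"
    and guarantee: "\<And>i. i \<in> I \<Longrightarrow> ennreal T \<le> exp_rev P Qry Out k (D i)"
    and rev_le: "\<And>\<omega> i. i \<in> I \<Longrightarrow> rev_price (D i) (Out \<omega> (answers Qry (D i) \<omega> k)) \<le> h \<omega> i"
    and h_nonneg: "\<And>\<omega> i. 0 \<le> h \<omega> i"
    and sum_le: "\<And>\<omega>. sum (h \<omega>) I \<le> B"
    and T: "0 \<le> T"
  shows "real (card I) * T \<le> B"
proof -
  have B: "0 \<le> B"
    using sum_nonneg[of I "h undefined"] sum_le[of undefined] h_nonneg by force
  have pointwise: "(\<Sum>i\<in>I. ennreal (rev_price (D i) (Out \<omega> (answers Qry (D i) \<omega> k)))) \<le> ennreal B"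
    for \<omega>
  proof -
    have "(\<Sum>i\<in>I. ennreal (rev_price (D i) (Out \<omega> (answers Qry (D i) \<omega> k))))
        \<le> (\<Sum>i\<in>I. ennreal (h \<omega> i))"
      using rev_le by (intro sum_mono ennreal_leI)
    also have "\<dots> = ennreal (sum (h \<omega>) I)"
      using h_nonneg by (simp add: sum_ennreal)
    also have "\<dots> \<le> ennreal B"
      using sum_le by (rule ennreal_leI)
    finally show ?thesis .
  qed
  have "ennreal (real (card I) * T) = (\<Sum>i\<in>I. ennreal T)"
    using T by (simp add: ennreal_mult ennreal_of_nat_eq_real_of_nat)
  also have "\<dots> \<le> (\<Sum>i\<in>I. exp_rev P Qry Out k (D i))"
    using guarantee by (rule sum_mono)
  also have "\<dots> \<le> (\<integral>\<^sup>+ \<omega>. (\<Sum>i\<in>I. ennreal (rev_price (D i) (Out \<omega> (answers Qry (D i) \<omega> k)))) \<partial>P)"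
    unfolding exp_rev_def by (rule nn_integral_sum_superadditive[OF I])
  also have "\<dots> \<le> (\<integral>\<^sup>+ \<omega>. ennreal B \<partial>P)"
    by (intro nn_integral_mono pointwise)
  also have "\<dots> = ennreal B"
    using P by (simp add: prob_space.emeasure_space_1)
  finally show ?thesis
    using B by (simp add: ennreal_le_iff)
qed

section \<open>Distributions given by their value-at-quantile function\<close>

definition quantile_threshold :: "(real \<Rightarrow> bool) \<Rightarrow> bool" where
  "quantile_threshold Pr \<longleftrightarrow>
     (\<exists>S. 0 \<le> S \<and> S \<le> 1 \<and> (\<forall>q. 0 < q \<and> q \<le> 1 \<longrightarrow> (Pr q \<longleftrightarrow> q \<le> S)))"

lemma quantile_threshold_linear:
  assumes "0 \<le> (a::real)"
  shows "quantile_threshold (\<lambda>q. x * q \<le> a + b * q)"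
proof (cases "x \<le> b")
  case True
  then have "x * q \<le> a + b * q" if "0 < q" for q
    using assms that mult_right_mono[of x b q] by linarith
  then show ?thesis
    unfolding quantile_threshold_def by (intro exI[of _ 1]) auto
next
  case False
  have "(x * q \<le> a + b * q) \<longleftrightarrow> q \<le> min 1 (a / (x - b))" if "0 < q" "q \<le> 1" for q
  proof -
    have "(x * q \<le> a + b * q) \<longleftrightarrow> (x - b) * q \<le> a" by (simp add: algebra_simps)
    also have "\<dots> \<longleftrightarrow> q \<le> a / (x - b)" using False by (simp add: field_simps mult.commute)
    finally show ?thesis using that by simp
  qed
  then show ?thesis
    unfolding quantile_threshold_def using assms False by (intro exI[of _ "min 1 (a / (x - b))"]) auto
qed

lemma quantile_threshold_conj:
  assumes "quantile_threshold P" "quantile_threshold Q"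
  shows "quantile_threshold (\<lambda>q. P q \<and> Q q)"
proof -
  obtain S1 S2 where "0 \<le> S1" "S1 \<le> 1" "\<forall>q. 0 < q \<and> q \<le> 1 \<longrightarrow> (P q \<longleftrightarrow> q \<le> S1)"
    "0 \<le> S2" "S2 \<le> 1" "\<forall>q. 0 < q \<and> q \<le> 1 \<longrightarrow> (Q q \<longleftrightarrow> q \<le> S2)"
    using assms unfolding quantile_threshold_def by blast
  then show ?thesis
    unfolding quantile_threshold_def by (intro exI[of _ "min S1 S2"]) auto
qed

lemma quantile_threshold_all_le:
  "(\<And>d. d \<le> (n::nat) \<Longrightarrow> quantile_threshold (P d)) \<Longrightarrow> quantile_threshold (\<lambda>q. \<forall>d\<le>n. P d q)"
proof (induction n)
  case 0
  then show ?case by simp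
next
  case (Suc n)
  have "quantile_threshold (\<lambda>q. (\<forall>d\<le>n. P d q) \<and> P (Suc n) q)"
    using Suc by (intro quantile_threshold_conj) auto
  moreover have "(\<forall>d\<le>Suc n. P d q) \<longleftrightarrow> (\<forall>d\<le>n. P d q) \<and> P (Suc n) q" for q
    by (auto simp: le_Suc_eq)
  ultimately show ?case by simp
qed

definition unif01 :: "real measure" where
  "unif01 = restrict_space lborel {0<..1}"

definition value_dist :: "(real \<Rightarrow> real) \<Rightarrow> real measure" where
  "value_dist v = distr unif01 borel v"

lemma space_unif01 [simp]: "space unif01 = {0<..1}"
  by (simp add: unif01_def)

lemma measure_unif01_Ioc:
  assumes "0 \<le> S" "S \<le> 1"
  shows "{0<..S} \<in> sets unif01" "measure unif01 {0<..S} = S"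
  using assms unfolding unif01_def
  by (auto simp: sets_restrict_space_iff) (subst measure_restrict_space; auto)

lemma prob_space_unif01: "prob_space unif01"
  by standard (simp add: unif01_def emeasure_restrict_space)

text \<open>The threshold condition says that v is nonincreasing and that its superlevel
  sets are intervals (0,S]: this makes v the value-at-quantile function of the law
  of v(U).\<close>
locale value_curve =
  fixes v :: "real \<Rightarrow> real"
  assumes threshold: "\<And>x. quantile_threshold (\<lambda>q. x \<le> v q)"
    and nonneg: "\<And>q. 0 < q \<Longrightarrow> q \<le> 1 \<Longrightarrow> 0 \<le> v q"
begin

lemma measurable: "v \<in> borel_measurable unif01"
proof (rule borel_measurableI_ge)
  fix y
  obtain S where S: "0 \<le> S" "S \<le> 1" "\<forall>q. 0 < q \<and> q \<le> 1 \<longrightarrow> (y \<le> v q \<longleftrightarrow> q \<le> S)"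
    using threshold[of y] unfolding quantile_threshold_def by blast
  then have "{x \<in> space unif01. y \<le> v x} = {0<..S}" by auto
  then show "{x \<in> space unif01. y \<le> v x} \<in> sets unif01"
    using measure_unif01_Ioc S by simp
qed

lemma measure_value_dist:
  "A \<in> sets borel \<Longrightarrow> measure (value_dist v) A = measure unif01 (v -` A \<inter> {0<..1})"
  unfolding value_dist_def by (subst measure_distr[OF measurable]) auto

lemma quantile_value_dist:
  "\<exists>S. 0 \<le> S \<and> S \<le> 1 \<and> (\<forall>q. 0 < q \<and> q \<le> 1 \<longrightarrow> (x \<le> v q \<longleftrightarrow> q \<le> S))
     \<and> quantile (value_dist v) x = S"
proof -
  obtain S where S: "0 \<le> S" "S \<le> 1" "\<forall>q. 0 < q \<and> q \<le> 1 \<longrightarrow> (x \<le> v q \<longleftrightarrow> q \<le> S)"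
    using threshold[of x] unfolding quantile_threshold_def by blast
  then have "v -` {x..} \<inter> {0<..1} = {0<..S}" by auto
  then have "quantile (value_dist v) x = S"
    unfolding quantile_def by (simp add: measure_value_dist measure_unif01_Ioc S)
  with S show ?thesis by blast
qed

lemma quantile_ge_iff:
  assumes "0 < q" "q \<le> 1"
  shows "q \<le> quantile (value_dist v) x \<longleftrightarrow> x \<le> v q"
  using quantile_value_dist[of x] assms by auto

lemma quantile_nonneg: "0 \<le> quantile (value_dist v) x"
  using quantile_value_dist[of x] by auto

lemma quantile_le_1: "quantile (value_dist v) x \<le> 1"
  using quantile_value_dist[of x] by auto

lemma value_at_value_dist:
  assumes "0 < q" "q \<le> 1"
  shows "value_at (value_dist v) q = v q"
proof -
  have "{w. 0 \<le> w \<and> q \<le> quantile (value_dist v) w} = {0..v q}"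
    by (rule set_eqI) (simp add: quantile_ge_iff[OF assms])
  then show ?thesis
    unfolding value_at_def using nonneg[OF assms] by (simp add: cSup_atLeastAtMost)
qed

lemma measure_value_dist_eq_1:
  assumes "\<And>q. 0 < q \<Longrightarrow> q \<le> 1 \<Longrightarrow> a \<le> v q \<and> v q \<le> b"
  shows "measure (value_dist v) {a..b} = 1"
proof -
  have "v -` {a..b} \<inter> {0<..1} = {0<..1}" using assms by auto
  then show ?thesis by (simp add: measure_value_dist measure_unif01_Ioc)
qed

lemma val_dist_value_dist: "val_dist (value_dist v)"
proof -
  have "v -` {0..} \<inter> {0<..1} = {0<..1}" using nonneg by auto
  then have "measure (value_dist v) {0..} = 1"
    by (simp add: measure_value_dist measure_unif01_Ioc)
  moreover have "prob_space (value_dist v)"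
    unfolding value_dist_def by (rule prob_space.prob_space_distr[OF prob_space_unif01 measurable])
  ultimately show ?thesis
    unfolding val_dist_def by (simp add: value_dist_def)
qed

lemma rev_price_pos_imp:
  assumes "0 < rev_price (value_dist v) p"
  shows "0 < p" "0 < quantile (value_dist v) p"
  using assms quantile_nonneg[of p] unfolding rev_price_def
  by (auto simp: zero_less_mult_iff)

lemma rev_price_le_curve:
  assumes "0 < rev_price (value_dist v) p"
  shows "rev_price (value_dist v) p \<le> quantile (value_dist v) p * v (quantile (value_dist v) p)"
proof -
  let ?S = "quantile (value_dist v) p"
  have "p \<le> v ?S"
    using quantile_ge_iff[of ?S p] rev_price_pos_imp[OF assms] quantile_le_1 by auto
  then have "p * ?S \<le> v ?S * ?S"
    using rev_price_pos_imp(2)[OF assms] by (intro mult_right_mono) auto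
  then show ?thesis
    unfolding rev_price_def by (simp add: mult.commute)
qed

lemma rev_price_ge_curve:
  assumes "0 < q" "q \<le> 1"
  shows "q * v q \<le> rev_price (value_dist v) (v q)"
proof -
  have "q * v q \<le> quantile (value_dist v) (v q) * v q"
    using quantile_ge_iff[OF assms, of "v q"] nonneg[OF assms] by (simp add: mult_right_mono)
  then show ?thesis
    unfolding rev_price_def by (simp add: mult.commute)
qed

lemma rev_price_le_bound:
  assumes "\<And>q. 0 < q \<Longrightarrow> q \<le> 1 \<Longrightarrow> q * v q \<le> B" "0 \<le> B"
  shows "rev_price (value_dist v) p \<le> B"
proof (cases "0 < rev_price (value_dist v) p")
  case True
  let ?S = "quantile (value_dist v) p"
  have "?S * v ?S \<le> B"
    using rev_price_pos_imp(2)[OF True] quantile_le_1 assms(1) by blast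
  then show ?thesis
    using rev_price_le_curve[OF True] by linarith
next
  case False
  then show ?thesis using assms(2) by linarith
qed

lemma OPT_ge_curve:
  assumes "\<And>q. 0 < q \<Longrightarrow> q \<le> 1 \<Longrightarrow> q * v q \<le> B" "0 \<le> B" and q: "0 < q" "q \<le> 1"
  shows "q * v q \<le> OPT (value_dist v)"
proof -
  have "bdd_above (rev_price (value_dist v) ` {0..})"
    by (rule bdd_aboveI2) (rule rev_price_le_bound[OF assms(1,2)])
  then have "rev_price (value_dist v) (v q) \<le> OPT (value_dist v)"
    unfolding OPT_def using nonneg[OF q] by (intro cSUP_upper) auto
  then show ?thesis
    using rev_price_ge_curve[OF q] by linarith
qed

end

section \<open>Lower bound by a family of bumped distributions\<close>

text \<open>All distributions of the family have revenue r at the quantiles r / x j of the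
  grid values x j; distribution i \<ge> 1 moreover sells x i at the larger quantile
  (r + \<Delta>) / x i.  The gap condition makes the windows of quantiles at which
  distribution i differs from distribution 0 pairwise disjoint, so a query detects
  at most one bump, and a price earns more than r on at most one of them.\<close>
locale bump_family =
  fixes m :: nat and x :: "nat \<Rightarrow> real" and r \<Delta> :: real
  assumes r_pos: "0 < r" and \<Delta>_pos: "0 < \<Delta>" and x_0: "x 0 = r"
    and x_gap: "\<And>j. j < m \<Longrightarrow> (r + \<Delta>) * x j < r * x (Suc j)"
begin

definition q_lo :: "nat \<Rightarrow> real" where "q_lo j = r / x j"
definition q_hi :: "nat \<Rightarrow> real" where "q_hi j = (r + \<Delta>) / x j"
definition q_cut :: "nat \<Rightarrow> nat \<Rightarrow> real" where
  "q_cut i j = (if j = i \<and> 0 < i then q_hi j else q_lo j)"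
definition bump :: "nat \<Rightarrow> real \<Rightarrow> real" where
  "bump i q = Max {x j | j. j \<le> m \<and> q \<le> q_cut i j}"
definition in_window :: "nat \<Rightarrow> real \<Rightarrow> bool" where
  "in_window i q \<longleftrightarrow> q_lo i < q \<and> q \<le> q_hi i"

lemma x_pos: "j \<le> m \<Longrightarrow> 0 < x j"
proof (induction j)
  case (Suc j)
  then have "0 < (r + \<Delta>) * x j" using r_pos \<Delta>_pos by simp
  also have "\<dots> < r * x (Suc j)" using x_gap Suc by simp
  finally show ?case using r_pos by (simp add: zero_less_mult_iff)
qed (simp add: x_0 r_pos)

lemma x_less_Suc: "j < m \<Longrightarrow> x j < x (Suc j)"
proof -
  assume j: "j < m"
  have "r * x j < (r + \<Delta>) * x j" using x_pos[of j] j \<Delta>_pos by simp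
  also have "\<dots> < r * x (Suc j)" using x_gap j by simp
  finally show ?thesis using r_pos by simp
qed

lemma x_mono: "i \<le> j \<Longrightarrow> j \<le> m \<Longrightarrow> x i \<le> x j"
proof (induction j)
  case (Suc j)
  then show ?case
    using x_less_Suc[of j] by (cases "i = Suc j") force+
qed simp

lemma q_lo_0: "q_lo 0 = 1"
  using x_0 r_pos by (simp add: q_lo_def)

lemma q_lo_pos: "j \<le> m \<Longrightarrow> 0 < q_lo j"
  using x_pos r_pos by (simp add: q_lo_def)

lemma q_hi_pos: "j \<le> m \<Longrightarrow> 0 < q_hi j"
  using x_pos r_pos \<Delta>_pos by (simp add: q_hi_def)

lemma q_lo_antimono: "i \<le> j \<Longrightarrow> j \<le> m \<Longrightarrow> q_lo j \<le> q_lo i"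
  unfolding q_lo_def using x_mono[of i j] x_pos[of i] r_pos by (simp add: divide_left_mono)

lemma q_lo_le_1: "j \<le> m \<Longrightarrow> q_lo j \<le> 1"
  using q_lo_antimono[of 0 j] q_lo_0 by simp

lemma q_hi_less_q_lo_pred: "1 \<le> j \<Longrightarrow> j \<le> m \<Longrightarrow> q_hi j < q_lo (j - 1)"
proof -
  assume j: "1 \<le> j" "j \<le> m"
  then obtain j' where j': "j = Suc j'" by (cases j) auto
  have "(r + \<Delta>) * x j' < r * x j" using x_gap[of j'] j j' by simp
  then show ?thesis
    unfolding q_lo_def q_hi_def using x_pos[of j] x_pos[of j'] j j'
    by (simp add: divide_simps mult.commute)
qed

lemma q_lo_less_q_hi: "j \<le> m \<Longrightarrow> q_lo j < q_hi j"
  unfolding q_lo_def q_hi_def using x_pos[of j] \<Delta>_pos by (simp add: divide_strict_right_mono)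

lemma q_cut_le_1:
  assumes "j \<le> m"
  shows "q_cut i j \<le> 1"
proof (cases "j = i \<and> 0 < i")
  case True
  then have "q_hi j < q_lo (j - 1)" using q_hi_less_q_lo_pred[of j] assms by simp
  also have "\<dots> \<le> 1" using q_lo_le_1[of "j - 1"] assms by simp
  finally show ?thesis using True by (simp add: q_cut_def)
next
  case False
  then show ?thesis using q_lo_le_1 assms by (auto simp: q_cut_def)
qed

lemma q_cut_mult_x_le: "j \<le> m \<Longrightarrow> q_cut i j * x j \<le> r + \<Delta>"
  using x_pos[of j] \<Delta>_pos by (auto simp: q_cut_def q_lo_def q_hi_def)

lemma bump_ge: "j \<le> m \<Longrightarrow> q \<le> q_cut i j \<Longrightarrow> x j \<le> bump i q"
  unfolding bump_def by (rule Max_ge) auto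

lemma bump_obtain:
  assumes "q \<le> 1"
  obtains j where "j \<le> m" "q \<le> q_cut i j" "bump i q = x j"
proof -
  have "q_cut i 0 = 1" using q_lo_0 by (simp add: q_cut_def)
  then have "{x j | j. j \<le> m \<and> q \<le> q_cut i j} \<noteq> {}" using assms by force
  then have "bump i q \<in> {x j | j. j \<le> m \<and> q \<le> q_cut i j}"
    unfolding bump_def by (intro Max_in) auto
  then show ?thesis using that by auto
qed

lemma bump_ge_iff:
  assumes "q \<le> 1"
  shows "y \<le> bump i q \<longleftrightarrow> (\<exists>j. j \<le> m \<and> q \<le> q_cut i j \<and> y \<le> x j)"
proof
  assume "y \<le> bump i q"
  then show "\<exists>j. j \<le> m \<and> q \<le> q_cut i j \<and> y \<le> x j"
    using bump_obtain[OF assms, of i] by metis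
next
  assume "\<exists>j. j \<le> m \<and> q \<le> q_cut i j \<and> y \<le> x j"
  then show "y \<le> bump i q" using bump_ge order_trans by blast
qed

lemma bump_range: "q \<le> 1 \<Longrightarrow> r \<le> bump i q \<and> bump i q \<le> x m"
  using bump_ge[of 0 q i] bump_obtain[of q i] x_mono q_lo_0 x_0
  by (fastforce simp: q_cut_def)

lemma value_curve_bump: "value_curve (bump i)"
proof
  fix y
  let ?T = "{q_cut i j | j. j \<le> m \<and> y \<le> x j}"
  define S where "S = Max (insert 0 ?T)"
  have fin: "finite (insert 0 ?T)" by simp
  have "0 \<le> S" unfolding S_def by (rule Max_ge[OF fin]) simp
  moreover have "S \<le> 1" unfolding S_def using fin by (subst Max_le_iff) (auto intro: q_cut_le_1)
  moreover have "y \<le> bump i q \<longleftrightarrow> q \<le> S" if "0 < q" "q \<le> 1" for q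
  proof -
    have "q \<le> S \<longleftrightarrow> (\<exists>a\<in>insert 0 ?T. q \<le> a)" unfolding S_def by (rule Max_ge_iff[OF fin]) simp
    then show ?thesis using that bump_ge_iff[of q] by auto
  qed
  ultimately show "quantile_threshold (\<lambda>q. y \<le> bump i q)"
    unfolding quantile_threshold_def by blast
next
  fix q :: real
  assume "0 < q" "q \<le> 1"
  then show "0 \<le> bump i q" using bump_range[of q i] r_pos by simp
qed

sublocale D: value_curve "bump i" for i
  by (rule value_curve_bump)

lemma revenue_curve_le:
  assumes "0 < q" "q \<le> 1"
  shows "q * bump i q \<le> r + \<Delta>"
proof -
  obtain j where j: "j \<le> m" "q \<le> q_cut i j" "bump i q = x j"
    using bump_obtain[OF assms(2)] .
  have "q * x j \<le> q_cut i j * x j"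
    using j x_pos[of j] by (simp add: mult_right_mono)
  then show ?thesis
    unfolding j(3) using q_cut_mult_x_le[OF j(1), of i] by linarith
qed

lemma rev_price_bump_le: "rev_price (value_dist (bump i)) p \<le> r + \<Delta>"
  using D.rev_price_le_bound revenue_curve_le r_pos \<Delta>_pos by simp

lemma OPT_bump_ge:
  assumes "1 \<le> i" "i \<le> m"
  shows "r + \<Delta> \<le> OPT (value_dist (bump i))"
proof -
  have q: "0 < q_hi i" "q_hi i \<le> 1"
    using assms q_hi_pos[of i] q_cut_le_1[of i i] by (auto simp: q_cut_def)
  have "x i \<le> bump i (q_hi i)"
    using bump_ge[of i "q_hi i" i] assms by (simp add: q_cut_def)
  then have "r + \<Delta> \<le> q_hi i * bump i (q_hi i)"
    using q x_pos[of i] assms mult_left_mono[of "x i" _ "q_hi i"] by (simp add: q_hi_def)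
  also have "\<dots> \<le> OPT (value_dist (bump i))"
    using revenue_curve_le r_pos \<Delta>_pos q by (intro D.OPT_ge_curve) auto
  finally show ?thesis .
qed

lemma rev_price_bump_gt_imp:
  assumes i: "1 \<le> i" "i \<le> m" and gt: "r < rev_price (value_dist (bump i)) p"
  shows "x (i - 1) < p \<and> p \<le> x i"
proof -
  let ?S = "quantile (value_dist (bump i)) p"
  have pos: "0 < rev_price (value_dist (bump i)) p" using gt r_pos by linarith
  obtain j where j: "j \<le> m" "?S \<le> q_cut i j" "bump i ?S = x j"
    by (rule bump_obtain[OF D.quantile_le_1])
  have "r < ?S * x j"
    using gt D.rev_price_le_curve[OF pos] j by simp
  also have "\<dots> \<le> q_cut i j * x j"
    using j x_pos[of j] by (simp add: mult_right_mono)
  finally have "j = i"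
    using x_pos[of j] j by (auto simp: q_cut_def q_lo_def split: if_splits)
  then have S_le: "?S \<le> q_hi i" using j i by (simp add: q_cut_def)
  have "p \<le> x i"
    using D.quantile_ge_iff[of ?S i p] D.rev_price_pos_imp[OF pos] D.quantile_le_1 j \<open>j = i\<close>
    by simp
  moreover have "x (i - 1) < p"
  proof (rule ccontr)
    assume "\<not> x (i - 1) < p"
    moreover have "q_cut i (i - 1) = q_lo (i - 1)" unfolding q_cut_def using i by auto
    then have "x (i - 1) \<le> bump i (q_lo (i - 1))"
      using bump_ge[of "i - 1" "q_lo (i - 1)" i] i by simp
    ultimately have "p \<le> bump i (q_lo (i - 1))" by linarith
    then have "q_lo (i - 1) \<le> ?S"
      using D.quantile_ge_iff[of "q_lo (i - 1)" i p] q_lo_pos[of "i - 1"] q_lo_le_1[of "i - 1"] i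
      by simp
    then show False using S_le q_hi_less_q_lo_pred[of i] i by simp
  qed
  ultimately show ?thesis by simp
qed

lemma bump_eq_bump_0:
  assumes "\<not> in_window i q"
  shows "bump i q = bump 0 q"
proof -
  have "q \<le> q_cut i j \<longleftrightarrow> q \<le> q_cut 0 j" if "j \<le> m" for j
    using assms q_lo_less_q_hi[OF that] by (auto simp: q_cut_def in_window_def)
  then have "{x j | j. j \<le> m \<and> q \<le> q_cut i j} = {x j | j. j \<le> m \<and> q \<le> q_cut 0 j}"
    by blast
  then show ?thesis by (simp add: bump_def)
qed

lemma in_window_unique:
  assumes "1 \<le> i" "i \<le> m" "1 \<le> i'" "i' \<le> m" "in_window i q" "in_window i' q"
  shows "i = i'"
proof -
  have "\<not> a < b" if "1 \<le> b" "b \<le> m" "in_window a q" "in_window b q" for a b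
  proof
    assume "a < b"
    then have "q_lo (b - 1) \<le> q_lo a" using q_lo_antimono[of a "b - 1"] that by simp
    then have "q_hi b < q_lo a" using q_hi_less_q_lo_pred[of b] that by simp
    then show False using that unfolding in_window_def by simp
  qed
  then show ?thesis using assms by (meson linorder_neqE_nat)
qed

lemma answers_eq_answers_0:
  assumes Qry: "rand_alg P Qry"
    and miss: "\<And>s. s < k \<Longrightarrow> \<not> in_window i (Qry \<omega> (answers Qry (value_dist (bump 0)) \<omega> s))"
  shows "s \<le> k \<Longrightarrow> answers Qry (value_dist (bump i)) \<omega> s = answers Qry (value_dist (bump 0)) \<omega> s"
proof (induction s)
  case (Suc s)
  let ?q = "Qry \<omega> (answers Qry (value_dist (bump 0)) \<omega> s)"
  have q: "0 < ?q" "?q \<le> 1" using Qry unfolding rand_alg_def by auto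
  have "bump i ?q = bump 0 ?q" using bump_eq_bump_0 miss[of s] Suc by simp
  then show ?case
    using Suc D.value_at_value_dist[OF q] by (simp add: Let_def)
qed simp

lemma card_in_window_le:
  "card {i \<in> {1..m}. \<exists>s<k. in_window i (qs s)} \<le> k"
proof -
  have one: "card {i \<in> {1..m}. in_window i q} \<le> 1" for q
  proof -
    have "card {i \<in> {1..m}. in_window i q} \<le> Suc 0"
      using in_window_unique by (intro card_le_Suc0_iff_eq[THEN iffD2]) auto
    then show ?thesis by simp
  qed
  have "{i \<in> {1..m}. \<exists>s<k. in_window i (qs s)} = (\<Union>s<k. {i \<in> {1..m}. in_window i (qs s)})"
    by auto
  then have "card {i \<in> {1..m}. \<exists>s<k. in_window i (qs s)}
      \<le> (\<Sum>s<k. card {i \<in> {1..m}. in_window i (qs s)})"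
    by (simp add: card_UN_le)
  also have "\<dots> \<le> (\<Sum>s<k. 1)"
    using one by (intro sum_mono)
  finally show ?thesis by simp
qed

lemma card_rev_price_gt_le_1:
  "card {i \<in> {1..m}. r < rev_price (value_dist (bump i)) p} \<le> 1"
proof -
  have "\<not> a < b" if "a \<in> {1..m}" "b \<in> {1..m}"
    "r < rev_price (value_dist (bump a)) p" "r < rev_price (value_dist (bump b)) p" for a b
  proof
    assume "a < b"
    then have "x a \<le> x (b - 1)" using x_mono[of a "b - 1"] that(2) by simp
    moreover have "p \<le> x a" "x (b - 1) < p"
      using rev_price_bump_gt_imp that by auto
    ultimately show False by simp
  qed
  then have "a = b" if "a \<in> {i \<in> {1..m}. r < rev_price (value_dist (bump i)) p}"
    "b \<in> {i \<in> {1..m}. r < rev_price (value_dist (bump i)) p}" for a b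
    using that linorder_neqE_nat by blast
  then have "card {i \<in> {1..m}. r < rev_price (value_dist (bump i)) p} \<le> Suc 0"
    by (intro card_le_Suc0_iff_eq[THEN iffD2]) auto
  then show ?thesis by simp
qed

theorem bump_lower_bound:
  assumes Qry: "rand_alg P Qry"
    and guarantee: "\<And>i. 1 \<le> i \<Longrightarrow> i \<le> m \<Longrightarrow> ennreal T \<le> exp_rev P Qry Out k (value_dist (bump i))"
    and T: "0 \<le> T"
  shows "real m * T \<le> real m * r + real (k + 1) * \<Delta>"
proof -
  define base where "base \<omega> = answers Qry (value_dist (bump 0)) \<omega>" for \<omega>
  define Hit where "Hit \<omega> = {i \<in> {1..m}. \<exists>s<k. in_window i (Qry \<omega> (base \<omega> s))}" for \<omega>
  define High where
    "High \<omega> = {i \<in> {1..m}. r < rev_price (value_dist (bump i)) (Out \<omega> (base \<omega> k))}" for \<omega>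
  define h where "h \<omega> i = (if i \<in> Hit \<omega> \<union> High \<omega> then r + \<Delta> else r)" for \<omega> i
  have rev_le: "rev_price (value_dist (bump i)) (Out \<omega> (answers Qry (value_dist (bump i)) \<omega> k))
      \<le> h \<omega> i" if "i \<in> {1..m}" for \<omega> i
  proof (cases "i \<in> Hit \<omega> \<union> High \<omega>")
    case True
    then show ?thesis using rev_price_bump_le by (simp add: h_def)
  next
    case False
    then have "answers Qry (value_dist (bump i)) \<omega> k = base \<omega> k"
      using that answers_eq_answers_0[OF Qry] unfolding Hit_def base_def by auto
    then show ?thesis using False that unfolding h_def High_def by auto
  qed
  have sum_le: "sum (h \<omega>) {1..m} \<le> real m * r + real (k + 1) * \<Delta>" for \<omega>
  proof -
    have "{1..m} \<inter> (Hit \<omega> \<union> High \<omega>) = Hit \<omega> \<union> High \<omega>"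
      unfolding Hit_def High_def by auto
    then have "card ({1..m} \<inter> (Hit \<omega> \<union> High \<omega>)) \<le> card (Hit \<omega>) + card (High \<omega>)"
      by (simp add: card_Un_le)
    also have "\<dots> \<le> k + 1"
      using card_in_window_le card_rev_price_gt_le_1 unfolding Hit_def High_def by (intro add_mono)
    finally have card: "real (card ({1..m} \<inter> (Hit \<omega> \<union> High \<omega>))) \<le> real (k + 1)"
      by linarith
    have "sum (h \<omega>) {1..m} = (\<Sum>i\<in>{1..m}. r + (if i \<in> Hit \<omega> \<union> High \<omega> then \<Delta> else 0))"
      by (intro sum.cong) (auto simp: h_def)
    also have "\<dots> = real m * r + \<Delta> * real (card ({1..m} \<inter> (Hit \<omega> \<union> High \<omega>)))"
      by (simp add: sum.distrib sum.If_cases Un_def)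
    finally show ?thesis
      using card \<Delta>_pos mult_left_mono[OF card, of \<Delta>] by (simp add: mult.commute)
  qed
  have "real (card {1..m}) * T \<le> real m * r + real (k + 1) * \<Delta>"
  proof (rule yao_averaging[where D = "\<lambda>i. value_dist (bump i)" and h = h])
    show "prob_space P" using Qry by (simp add: rand_alg_def)
    show "ennreal T \<le> exp_rev P Qry Out k (value_dist (bump i))" if "i \<in> {1..m}" for i
      using guarantee that by simp
    show "0 \<le> h \<omega> i" for \<omega> i
      using r_pos \<Delta>_pos by (simp add: h_def)
  qed (use rev_le sum_le T in auto)
  then show ?thesis by simp
qed

lemma bounded_dist_bump:
  assumes "a \<le> r" "x m \<le> b"
  shows "bounded_dist a b (value_dist (bump i))"
  unfolding bounded_dist_def
proof
  show "val_dist (value_dist (bump i))" by (rule D.val_dist_value_dist)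
  show "measure (value_dist (bump i)) {a..b} = 1"
  proof (rule D.measure_value_dist_eq_1)
    fix q :: real
    assume "0 < q" "q \<le> 1"
    then show "a \<le> bump i q \<and> bump i q \<le> b" using bump_range[of q i] assms by auto
  qed
qed

end


lemma bump_family_geometric:
  assumes "0 < r" "0 < \<Delta>" "\<Delta> < r * \<rho>"
  shows "bump_family m (\<lambda>j. r * (1 + \<rho>) ^ j) r \<Delta>"
proof
  fix j
  have "0 < r * \<rho>" using assms by linarith
  then have "0 < (1 + \<rho>) ^ j" using assms by (simp add: zero_less_mult_iff)
  then have "(r + \<Delta>) * (r * (1 + \<rho>) ^ j) < (r * (1 + \<rho>)) * (r * (1 + \<rho>) ^ j)"
    using assms by (intro mult_strict_right_mono) (auto simp: algebra_simps)
  then show "(r + \<Delta>) * (r * (1 + \<rho>) ^ j) < r * (r * (1 + \<rho>) ^ Suc j)"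
    by (simp add: algebra_simps)
qed (use assms in auto)

lemma one_plus_power_le_exp: "0 \<le> (a::real) \<Longrightarrow> (1 + a) ^ n \<le> exp (a * real n)"
  using power_mono[OF exp_ge_add_one_self[of a], of n] by (simp add: exp_of_nat_mult[symmetric] mult.commute)

lemma bounded_additive_lower_bound:
  assumes \<epsilon>: "0 < \<epsilon>" "\<epsilon> < 1/100" and Qry: "rand_alg P Qry"
    and guarantee: "\<forall>D. bounded_dist 0 1 D \<longrightarrow> ennreal (OPT D - \<epsilon>) \<le> exp_rev P Qry Out k D"
  shows "1/40 / \<epsilon> \<le> real k"
proof -
  define m where "m = nat \<lfloor>1 / (10 * \<epsilon>)\<rfloor>"
  have m: "1 / (10 * \<epsilon>) - 1 \<le> real m" "real m \<le> 1 / (10 * \<epsilon>)"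
    using \<epsilon> unfolding m_def by (auto simp: of_nat_nat)
  interpret B: bump_family m "\<lambda>j. 1/2 * (1 + 5 * \<epsilon>) ^ j" "1/2" "2 * \<epsilon>"
    using \<epsilon> by (intro bump_family_geometric) auto
  have "(1 + 5 * \<epsilon>) ^ m \<le> exp (5 * \<epsilon> * real m)"
    using \<epsilon> by (intro one_plus_power_le_exp) auto
  also have "\<dots> \<le> exp (1/2)"
    using m \<epsilon> mult_left_mono[OF m(2), of "5 * \<epsilon>"] by simp
  also have "\<dots> \<le> 2"
    using exp_bound_lemma[of "1/2::real"] by simp
  finally have bounded: "bounded_dist 0 1 (value_dist (B.bump i))" for i
    by (intro B.bounded_dist_bump) auto
  have "ennreal (1/2 + \<epsilon>) \<le> exp_rev P Qry Out k (value_dist (B.bump i))"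
    if "1 \<le> i" "i \<le> m" for i
  proof -
    have "ennreal (1/2 + \<epsilon>) \<le> ennreal (OPT (value_dist (B.bump i)) - \<epsilon>)"
      using B.OPT_bump_ge[OF that] by (intro ennreal_leI) simp
    also have "\<dots> \<le> exp_rev P Qry Out k (value_dist (B.bump i))"
      using guarantee bounded by blast
    finally show ?thesis .
  qed
  then have "real m * (1/2 + \<epsilon>) \<le> real m * (1/2) + real (k + 1) * (2 * \<epsilon>)"
    using \<epsilon> by (intro B.bump_lower_bound[OF Qry]) auto
  then have "\<epsilon> * real m \<le> \<epsilon> * (2 * real (k + 1))"
    by (simp add: algebra_simps)
  then have "real m \<le> 2 * real (k + 1)"
    using \<epsilon> by simp
  then have "1 / (20 * \<epsilon>) - 3/2 \<le> real k"
    using m by (simp add: field_simps)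
  moreover have "1 / (40 * \<epsilon>) \<le> 1 / (20 * \<epsilon>) - 3/2"
    using \<epsilon> by (simp add: field_simps)
  ultimately show ?thesis by simp
qed

lemma bounded_multiplicative_lower_bound:
  assumes \<epsilon>: "0 < \<epsilon>" "\<epsilon> < 1/100" and H: "2 \<le> H" and Qry: "rand_alg P Qry"
    and guarantee: "\<forall>D. bounded_dist 1 H D \<longrightarrow> ennreal ((1 - \<epsilon>) * OPT D) \<le> exp_rev P Qry Out k D"
  shows "1/24 * ln H / \<epsilon> \<le> real k"
proof -
  have "ln 2 \<le> ln H"
    using H by simp
  then have ln_H: "1/2 \<le> ln H"
    using ln2_ge_two_thirds by linarith
  define m where "m = nat \<lfloor>ln H / (4 * \<epsilon>)\<rfloor>"
  have m: "ln H / (4 * \<epsilon>) - 1 \<le> real m" "real m \<le> ln H / (4 * \<epsilon>)"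
    using \<epsilon> ln_H unfolding m_def by (auto simp: of_nat_nat)
  interpret B: bump_family m "\<lambda>j. 1 * (1 + 4 * \<epsilon>) ^ j" 1 "3 * \<epsilon>"
    using \<epsilon> by (intro bump_family_geometric) auto
  have "(1 + 4 * \<epsilon>) ^ m \<le> exp (4 * \<epsilon> * real m)"
    using \<epsilon> by (intro one_plus_power_le_exp) auto
  also have "\<dots> \<le> exp (ln H)"
    using \<epsilon> mult_left_mono[OF m(2), of "4 * \<epsilon>"] by simp
  also have "\<dots> = H"
    using H by simp
  finally have bounded: "bounded_dist 1 H (value_dist (B.bump i))" for i
    by (intro B.bounded_dist_bump) auto
  have "ennreal ((1 - \<epsilon>) * (1 + 3 * \<epsilon>)) \<le> exp_rev P Qry Out k (value_dist (B.bump i))"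
    if "1 \<le> i" "i \<le> m" for i
  proof -
    have "ennreal ((1 - \<epsilon>) * (1 + 3 * \<epsilon>)) \<le> ennreal ((1 - \<epsilon>) * OPT (value_dist (B.bump i)))"
      using B.OPT_bump_ge[OF that] \<epsilon> by (intro ennreal_leI mult_left_mono) auto
    also have "\<dots> \<le> exp_rev P Qry Out k (value_dist (B.bump i))"
      using guarantee bounded by blast
    finally show ?thesis .
  qed
  then have "real m * ((1 - \<epsilon>) * (1 + 3 * \<epsilon>)) \<le> real m * 1 + real (k + 1) * (3 * \<epsilon>)"
    using \<epsilon> by (intro B.bump_lower_bound[OF Qry]) auto
  then have "\<epsilon> * (real m * (2 - 3 * \<epsilon>)) \<le> \<epsilon> * (3 * real (k + 1))"
    by (simp add: algebra_simps)
  then have "real m * (2 - 3 * \<epsilon>) \<le> 3 * real (k + 1)"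
    using \<epsilon> by simp
  moreover have "real m * 1 \<le> real m * (2 - 3 * \<epsilon>)"
    using \<epsilon> by (intro mult_left_mono) auto
  ultimately have "ln H / (12 * \<epsilon>) - 4/3 \<le> real k"
    using m by (simp add: field_simps)
  moreover have "4/3 \<le> ln H / (24 * \<epsilon>)"
    using \<epsilon> ln_H by (simp add: field_simps)
  ultimately show ?thesis by (simp add: field_simps)
qed


section \<open>Lower bound for regular distributions\<close>

lemma card_nat_window_le_2:
  assumes "\<And>i. i \<in> X \<Longrightarrow> a < real i \<and> real i < a + 2"
  shows "card X \<le> 2"
proof -
  have "X \<subseteq> {nat (\<lfloor>a\<rfloor> + 1), nat (\<lfloor>a\<rfloor> + 2)}"
  proof
    fix i
    assume "i \<in> X"
    then have "\<lfloor>a\<rfloor> < int i" "int i < \<lfloor>a\<rfloor> + 3" using assms[of i] by linarith+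
    then show "i \<in> {nat (\<lfloor>a\<rfloor> + 1), nat (\<lfloor>a\<rfloor> + 2)}" by auto
  qed
  then have "card X \<le> card {nat (\<lfloor>a\<rfloor> + 1), nat (\<lfloor>a\<rfloor> + 2)}" by (intro card_mono) auto
  also have "\<dots> \<le> 2" by (simp add: card_insert_le_m1)
  finally show ?thesis .
qed

lemma le_one_minus_max_iff:
  fixes s a b y :: real
  assumes "0 < s"
  shows "y \<le> 1 - s * max 0 (max a b) \<longleftrightarrow> y \<le> 1 \<and> y \<le> 1 - s * a \<and> y \<le> 1 - s * b"
proof -
  define M where "M = max 0 (max a b)"
  have M: "M = 0 \<or> M = a \<or> M = b" "0 \<le> M" "a \<le> M" "b \<le> M"
    unfolding M_def by auto
  have "s * a \<le> s * M" "s * b \<le> s * M" "0 \<le> s * M"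
    using M assms by (auto intro: mult_left_mono)
  then show ?thesis using M(1) unfolding M_def[symmetric] by auto
qed

text \<open>Leaves i < 2^n of the complete binary tree of depth n are indexed by their
  binary expansion, so the ancestor of leaf i at depth d is i div 2^(n-d); node c at
  depth d owns the dyadic interval [ivl_lo d c, ivl_hi d c] of [1/4, 3/4].\<close>
locale dyadic_family =
  fixes n :: nat
begin

definition width :: "nat \<Rightarrow> real" where "width d = 1 / 2 ^ Suc d"
definition slope :: "nat \<Rightarrow> real" where "slope d = 1 / 4 ^ d"
definition anc :: "nat \<Rightarrow> nat \<Rightarrow> nat" where "anc d i = i div 2 ^ (n - d)"
definition ivl_lo :: "nat \<Rightarrow> nat \<Rightarrow> real" where "ivl_lo d c = 1/4 + real c * width d"
definition ivl_hi :: "nat \<Rightarrow> nat \<Rightarrow> real" where "ivl_hi d c = ivl_lo d c + width d"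
definition gap :: "nat \<Rightarrow> nat \<Rightarrow> real \<Rightarrow> real" where
  "gap d c q = max 0 (max (ivl_lo d c - q) (q - ivl_hi d c))"
definition tent :: "nat \<Rightarrow> nat \<Rightarrow> real \<Rightarrow> real" where
  "tent d c q = 1 - slope d * gap d c q"
definition path_curve :: "nat \<Rightarrow> real \<Rightarrow> real" where
  "path_curve i q = Min ((\<lambda>d. tent d (anc d i) q) ` {..n})"
definition path_value :: "nat \<Rightarrow> real \<Rightarrow> real" where
  "path_value i q = path_curve i q / q"
definition far :: "nat \<Rightarrow> nat \<Rightarrow> real \<Rightarrow> bool" where
  "far d c q \<longleftrightarrow> width d / 3 \<le> gap d c q"

lemma width_pos: "0 < width d"
  by (simp add: width_def)

lemma slope_pos: "0 < slope d"
  by (simp add: slope_def)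

lemma slope_le_1: "slope d \<le> 1"
  by (simp add: slope_def)

lemma gap_nonneg: "0 \<le> gap d c q"
  by (simp add: gap_def)

lemma tent_le_1: "tent d c q \<le> 1"
  using slope_pos[of d] gap_nonneg[of d c q] by (simp add: tent_def)

lemma anc_less: "i < 2 ^ n \<Longrightarrow> d \<le> n \<Longrightarrow> anc d i < 2 ^ d"
  unfolding anc_def by (simp add: div_less_iff_less_mult power_add[symmetric])

lemma anc_n [simp]: "anc n i = i"
  by (simp add: anc_def)

lemma anc_anc: "d \<le> d' \<Longrightarrow> d' \<le> n \<Longrightarrow> anc d i = anc d' i div 2 ^ (d' - d)"
proof -
  assume "d \<le> d'" "d' \<le> n"
  then have "n - d = (n - d') + (d' - d)" by simp
  then show ?thesis unfolding anc_def by (simp add: power_add div_mult2_eq)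
qed

lemma ivl_lo_ge: "1/4 \<le> ivl_lo d c"
  using width_pos[of d] by (simp add: ivl_lo_def)

lemma ivl_hi_le: "c < 2 ^ d \<Longrightarrow> ivl_hi d c \<le> 3/4"
proof -
  assume "c < 2 ^ d"
  then have "real c + 1 \<le> 2 ^ d"
    by (metis Suc_leI of_nat_Suc of_nat_le_iff of_nat_numeral of_nat_power add.commute)
  then have "(real c + 1) / 2 ^ Suc d \<le> 2 ^ d / 2 ^ Suc d" by (intro divide_right_mono) auto
  then show ?thesis by (simp add: ivl_hi_def ivl_lo_def width_def field_simps)
qed

lemma ivl_lo_le: "c < 2 ^ d \<Longrightarrow> ivl_lo d c \<le> 3/4"
  using ivl_hi_le[of c d] width_pos[of d] by (simp add: ivl_hi_def)

lemma ivl_div_nested: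
  "ivl_lo d (c div 2 ^ e) \<le> ivl_lo (d + e) c \<and> ivl_hi (d + e) c \<le> ivl_hi d (c div 2 ^ e)"
proof -
  let ?X = "c div 2 ^ e"
  have "c = ?X * 2 ^ e + c mod 2 ^ e" "c mod 2 ^ e < 2 ^ e"
    by (rule div_mult_mod_eq[symmetric]) simp
  moreover have "(?X + 1) * 2 ^ e = ?X * 2 ^ e + 2 ^ e"
    by (simp add: algebra_simps)
  ultimately have "?X * 2 ^ e \<le> c" "c + 1 \<le> (?X + 1) * 2 ^ e"
    by linarith+
  then have "real (?X * 2 ^ e) \<le> real c" "real (c + 1) \<le> real ((?X + 1) * 2 ^ e)"
    by (simp_all only: of_nat_le_iff)
  then have "real ?X * 2 ^ e \<le> real c" "real c + 1 \<le> (real ?X + 1) * 2 ^ e"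
    by (simp_all add: algebra_simps)
  then have "real ?X * 2 ^ e * width (d + e) \<le> real c * width (d + e)"
    "(real c + 1) * width (d + e) \<le> (real ?X + 1) * 2 ^ e * width (d + e)"
    using width_pos[of "d + e"] by (simp_all add: mult_right_mono)
  moreover have "width d = 2 ^ e * width (d + e)"
    by (simp add: width_def power_add)
  ultimately show ?thesis
    by (simp add: ivl_hi_def ivl_lo_def algebra_simps)
qed

lemma ivl_nested:
  assumes "d \<le> d'" "d' \<le> n"
  shows "ivl_lo d (anc d i) \<le> ivl_lo d' (anc d' i) \<and> ivl_hi d' (anc d' i) \<le> ivl_hi d (anc d i)"
  using ivl_div_nested[of d "anc d' i" "d' - d"] anc_anc[OF assms, of i] assms by simp

lemma slope_less: "d < d' \<Longrightarrow> slope d' \<le> slope d / 4"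
proof -
  assume "d < d'"
  then have "(4::real) ^ Suc d \<le> 4 ^ d'" by (intro power_increasing) auto
  then show ?thesis unfolding slope_def by (simp add: field_simps)
qed

text \<open>Passing to a deeper node increases the gap at most by the width of the
  shallower interval, which a far point's gap already dominates, while the slope
  drops by a factor 4.\<close>
lemma tent_deeper_ge:
  assumes d: "d \<le> d'" "d' \<le> n" and far: "far d (anc d i) q"
  shows "tent d (anc d i) q \<le> tent d' (anc d' i) q"
proof (cases "d = d'")
  case False
  have "gap d' (anc d' i) q \<le> gap d (anc d i) q + width d"
    using ivl_nested[OF d, of i] width_pos[of d'] unfolding gap_def ivl_hi_def by (auto simp: max_def)
  also have "\<dots> \<le> 4 * gap d (anc d i) q"
    using far by (simp add: far_def)
  finally have "slope d' * gap d' (anc d' i) q \<le> (slope d / 4) * (4 * gap d (anc d i) q)"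
    using slope_less[of d d'] False d slope_pos[of d'] gap_nonneg[of d' "anc d' i" q]
    by (intro mult_mono) auto
  then show ?thesis unfolding tent_def by simp
qed simp

lemma path_curve_le_tent: "d \<le> n \<Longrightarrow> path_curve i q \<le> tent d (anc d i) q"
  unfolding path_curve_def by (intro Min_le) auto

lemma path_curve_ge_iff: "y \<le> path_curve i q \<longleftrightarrow> (\<forall>d\<le>n. y \<le> tent d (anc d i) q)"
  unfolding path_curve_def by (subst Min_ge_iff) auto

lemma path_curve_le_1: "path_curve i q \<le> 1"
  using path_curve_le_tent[of 0 i q] tent_le_1[of 0 "anc 0 i" q] by simp

lemma path_curve_eq_Min_prefix:
  assumes d: "d \<le> n" and far: "far d (anc d i) q"
  shows "path_curve i q = Min ((\<lambda>d'. tent d' (anc d' i) q) ` {..d})"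
proof (rule antisym)
  show "path_curve i q \<le> Min ((\<lambda>d'. tent d' (anc d' i) q) ` {..d})"
    unfolding path_curve_def using d by (intro Min_antimono) auto
  have "Min ((\<lambda>d'. tent d' (anc d' i) q) ` {..d}) \<le> tent d' (anc d' i) q" if "d' \<le> n" for d'
  proof (cases "d' \<le> d")
    case False
    have "Min ((\<lambda>d'. tent d' (anc d' i) q) ` {..d}) \<le> tent d (anc d i) q" by (intro Min_le) auto
    also have "\<dots> \<le> tent d' (anc d' i) q" using False that far by (intro tent_deeper_ge) auto
    finally show ?thesis .
  qed (intro Min_le, auto)
  then show "Min ((\<lambda>d'. tent d' (anc d' i) q) ` {..d}) \<le> path_curve i q"
    by (simp add: path_curve_ge_iff)
qed

lemma path_curve_eq_of_far:
  assumes "d \<le> n" "far d (anc d i) q" "anc d j = anc d i"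
  shows "path_curve j q = path_curve i q"
proof -
  have "anc d' j = anc d' i" if "d' \<le> d" for d'
    using anc_anc[OF that assms(1)] assms(3) by simp
  then have "(\<lambda>d'. tent d' (anc d' j) q) ` {..d} = (\<lambda>d'. tent d' (anc d' i) q) ` {..d}"
    by (intro image_cong) auto
  then show ?thesis
    using path_curve_eq_Min_prefix[OF assms(1)] assms(2,3) by metis
qed

lemma tent_nonneg:
  assumes "c < 2 ^ d" "0 \<le> q" "q \<le> 1"
  shows "0 \<le> tent d c q"
proof -
  have "gap d c q \<le> 1"
    using ivl_lo_le[OF assms(1)] ivl_lo_ge[of d c] width_pos[of d] assms
    unfolding gap_def ivl_hi_def by auto
  then have "slope d * gap d c q \<le> 1 * 1"
    using slope_le_1[of d] slope_pos[of d] gap_nonneg[of d c q] by (intro mult_mono) auto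
  then show ?thesis by (simp add: tent_def)
qed

lemma path_curve_nonneg: "i < 2 ^ n \<Longrightarrow> 0 \<le> q \<Longrightarrow> q \<le> 1 \<Longrightarrow> 0 \<le> path_curve i q"
  using tent_nonneg anc_less by (simp add: path_curve_ge_iff)

lemma path_curve_leaf: "path_curve i (ivl_lo n i) = 1"
proof -
  have "gap d (anc d i) (ivl_lo n i) = 0" if "d \<le> n" for d
    using ivl_nested[OF that order_refl, of i] width_pos[of n] by (simp add: gap_def ivl_hi_def)
  then have "1 \<le> path_curve i (ivl_lo n i)"
    by (simp add: path_curve_ge_iff tent_def)
  then show ?thesis using path_curve_le_1[of i "ivl_lo n i"] by simp
qed

text \<open>Each tent constraint is a conjunction of three linear constraints in q.\<close>
lemma value_curve_path:
  assumes i: "i < 2 ^ n"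
  shows "value_curve (path_value i)"
proof
  fix x
  let ?lin = "\<lambda>q. \<forall>d\<le>n. x * q \<le> 1 + 0 * q
      \<and> x * q \<le> (1 - slope d * ivl_lo d (anc d i)) + slope d * q
      \<and> x * q \<le> (1 + slope d * ivl_hi d (anc d i)) + (- slope d) * q"
  have "x \<le> path_value i q \<longleftrightarrow> ?lin q" if "0 < q" for q
  proof -
    have "x \<le> path_value i q \<longleftrightarrow> (\<forall>d\<le>n. x * q \<le> tent d (anc d i) q)"
      using that by (simp add: path_value_def pos_le_divide_eq path_curve_ge_iff)
    also have "\<dots> \<longleftrightarrow> ?lin q"
      unfolding tent_def gap_def using le_one_minus_max_iff[OF slope_pos] by (simp add: algebra_simps)
    finally show ?thesis .
  qed
  moreover have "quantile_threshold ?lin"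
  proof (intro quantile_threshold_all_le quantile_threshold_conj quantile_threshold_linear)
    fix d
    assume d: "d \<le> n"
    have "slope d * ivl_lo d (anc d i) \<le> 1 * 1"
      using slope_le_1[of d] slope_pos[of d] ivl_lo_le[OF anc_less[OF i d]] ivl_lo_ge[of d "anc d i"]
      by (intro mult_mono) auto
    then show "0 \<le> 1 - slope d * ivl_lo d (anc d i)" by simp
    show "0 \<le> 1 + slope d * ivl_hi d (anc d i)"
      using slope_pos[of d] ivl_lo_ge[of d "anc d i"] width_pos[of d]
      by (simp add: ivl_hi_def add_nonneg_nonneg)
  qed simp
  ultimately show "quantile_threshold (\<lambda>q. x \<le> path_value i q)"
    unfolding quantile_threshold_def by auto
next
  fix q :: real
  assume "0 < q" "q \<le> 1"
  then show "0 \<le> path_value i q" using path_curve_nonneg[OF i] by (simp add: path_value_def)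
qed

lemma gap_convex:
  assumes "0 \<le> u" "0 \<le> w" "u + w = 1"
  shows "gap d c (u * x + w * y) \<le> u * gap d c x + w * gap d c y"
proof -
  let ?A = "ivl_lo d c" and ?B = "ivl_hi d c"
  have "?A - (u * x + w * y) = u * (?A - x) + w * (?A - y)"
    "(u * x + w * y) - ?B = u * (x - ?B) + w * (y - ?B)"
    using assms by (simp_all add: algebra_simps flip: distrib_right)
  moreover have "u * (?A - x) \<le> u * gap d c x" "w * (?A - y) \<le> w * gap d c y"
    "u * (x - ?B) \<le> u * gap d c x" "w * (y - ?B) \<le> w * gap d c y"
    "0 \<le> u * gap d c x" "0 \<le> w * gap d c y"
    using assms unfolding gap_def by (auto intro!: mult_left_mono)
  ultimately show ?thesis
    unfolding gap_def[of d c "u * x + w * y"] by (simp add: gap_def[symmetric])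
qed

lemma path_curve_concave:
  assumes uw: "0 \<le> u" "0 \<le> w" "u + w = 1"
  shows "u * path_curve i x + w * path_curve i y \<le> path_curve i (u * x + w * y)"
proof (subst path_curve_ge_iff, intro allI impI)
  fix d
  assume d: "d \<le> n"
  have "u * path_curve i x + w * path_curve i y \<le> u * tent d (anc d i) x + w * tent d (anc d i) y"
    using path_curve_le_tent[OF d] uw by (intro add_mono mult_left_mono) auto
  also have "\<dots> = 1 - slope d * (u * gap d (anc d i) x + w * gap d (anc d i) y)"
    using uw by (simp add: tent_def algebra_simps)
  also have "\<dots> \<le> tent d (anc d i) (u * x + w * y)"
    using gap_convex[OF uw] slope_pos[of d] by (simp add: tent_def mult_left_mono)
  finally show "u * path_curve i x + w * path_curve i y \<le> tent d (anc d i) (u * x + w * y)" .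
qed

lemma regular_path:
  assumes i: "i < 2 ^ n"
  shows "regular_dist (value_dist (path_value i))"
proof -
  interpret D: value_curve "path_value i" by (rule value_curve_path[OF i])
  have curve: "rev_curve (value_dist (path_value i)) q = path_curve i q" if "q \<in> {0<..1}" for q
    using that D.value_at_value_dist[of q] by (simp add: rev_curve_def path_value_def)
  have "concave_on {0<..1} (rev_curve (value_dist (path_value i)))"
  proof (subst concave_on_iff, intro conjI ballI allI impI)
    fix x y u w :: real
    assume xy: "x \<in> {0<..1}" "y \<in> {0<..1}" and uw: "0 \<le> u" "0 \<le> w" "u + w = 1"
    have "u *\<^sub>R x + w *\<^sub>R y \<in> {0<..1}"
      by (intro convexD[OF _ xy uw] convex_real_interval)
    then show "u * rev_curve (value_dist (path_value i)) x + w * rev_curve (value_dist (path_value i)) y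
        \<le> rev_curve (value_dist (path_value i)) (u *\<^sub>R x + w *\<^sub>R y)"
      using path_curve_concave[OF uw] curve xy by simp
  qed (rule convex_real_interval)
  then show ?thesis
    unfolding regular_dist_def using D.val_dist_value_dist by simp
qed

lemma rev_price_path_le_1:
  assumes "i < 2 ^ n"
  shows "rev_price (value_dist (path_value i)) p \<le> 1"
  using value_curve.rev_price_le_bound[OF value_curve_path[OF assms]] path_curve_le_1
  by (simp add: path_value_def)

lemma OPT_path_ge_1:
  assumes i: "i < 2 ^ n"
  shows "1 \<le> OPT (value_dist (path_value i))"
proof -
  have q: "0 < ivl_lo n i" "ivl_lo n i \<le> 1"
    using ivl_lo_ge[of n i] ivl_lo_le[of i n] i by auto
  have "q * path_value i q \<le> 1" if "0 < q" for q
    using path_curve_le_1 that by (simp add: path_value_def)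
  then have "ivl_lo n i * path_value i (ivl_lo n i) \<le> OPT (value_dist (path_value i))"
    using q by (intro value_curve.OPT_ge_curve[OF value_curve_path[OF i], of 1]) auto
  then show ?thesis
    using q path_curve_leaf[of i] by (simp add: path_value_def)
qed


lemma gap_le_gap_plus_dist: "gap d c y \<le> gap d c s + \<bar>y - s\<bar>"
  unfolding gap_def by (auto simp: max_def abs_if)

lemma card_gap_less_le_2:
  assumes \<delta>: "\<delta> \<le> width d / 2" and X: "\<And>c. c \<in> X \<Longrightarrow> gap d c q < \<delta>"
  shows "card X \<le> 2"
proof (rule card_nat_window_le_2[where a = "(q - 1/4 - \<delta>) / width d - 1"])
  fix c
  assume "c \<in> X"
  then have "ivl_lo d c - q < \<delta>" "q - ivl_hi d c < \<delta>"
    using X[of c] unfolding gap_def by auto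
  then have "q - 1/4 - \<delta> - width d < real c * width d" "real c * width d < q - 1/4 + \<delta>"
    by (simp_all add: ivl_hi_def ivl_lo_def)
  then have "(q - 1/4 - \<delta>) / width d - 1 < real c" "real c < (q - 1/4 + \<delta>) / width d"
    using width_pos[of d] by (simp_all add: field_simps)
  moreover have "(q - 1/4 + \<delta>) / width d \<le> (q - 1/4 - \<delta>) / width d - 1 + 2"
    using \<delta> width_pos[of d] by (simp add: field_simps)
  ultimately show "(q - 1/4 - \<delta>) / width d - 1 < real c \<and> real c < (q - 1/4 - \<delta>) / width d - 1 + 2"
    by linarith
qed

text \<open>A price p with almost optimal revenue on distribution i sells at a quantile close
  to 1/p, and the steep leaf tent forces that quantile close to the leaf interval.\<close>
lemma rev_price_gt_imp_gap:
  assumes i: "i < 2 ^ n" and \<epsilon>: "0 < \<epsilon>" "\<epsilon> \<le> 1/8"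
    and gt: "1 - 2 * \<epsilon> < rev_price (value_dist (path_value i)) p"
  shows "gap n i (1 / p) < 2 * \<epsilon> * 4 ^ n + 4 * \<epsilon>"
proof -
  interpret D: value_curve "path_value i" by (rule value_curve_path[OF i])
  let ?S = "quantile (value_dist (path_value i)) p"
  have pos: "0 < rev_price (value_dist (path_value i)) p" using gt \<epsilon> by linarith
  note p = D.rev_price_pos_imp[OF pos]
  have "rev_price (value_dist (path_value i)) p \<le> path_curve i ?S"
    using D.rev_price_le_curve[OF pos] p by (simp add: path_value_def)
  also have "\<dots> \<le> 1 - slope n * gap n i ?S"
    using path_curve_le_tent[of n i ?S] by (simp add: tent_def)
  finally have pS: "1 - 2 * \<epsilon> < p * ?S" "p * ?S \<le> 1 - slope n * gap n i ?S"
    using gt by (simp_all add: rev_price_def)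
  then have "slope n * gap n i ?S < 2 * \<epsilon>"
    by linarith
  then have gap_S: "gap n i ?S < 2 * \<epsilon> * 4 ^ n"
    by (simp add: slope_def field_simps)
  have "p * ?S \<le> 1"
    using pS slope_pos[of n] gap_nonneg[of n i ?S] by (smt (verit) mult_nonneg_nonneg)
  then have S_le: "?S \<le> 1 / p"
    using p by (simp add: field_simps)
  have "(1 - 2 * \<epsilon>) * (1 / p) < ?S"
    using pS p by (simp add: field_simps mult.commute)
  moreover have "1/2 * (1 / p) \<le> (1 - 2 * \<epsilon>) * (1 / p)"
    using \<epsilon> p by (intro mult_right_mono) auto
  ultimately have "1 / p < 2" and "1 / p - ?S < 2 * \<epsilon> * (1 / p)"
    using D.quantile_le_1[of p] by (simp_all add: algebra_simps)
  then have "\<bar>1 / p - ?S\<bar> < 4 * \<epsilon>"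
    using S_le \<epsilon> mult_strict_left_mono[of "1 / p" 2 "2 * \<epsilon>"] by simp
  then show ?thesis
    using gap_le_gap_plus_dist[of n i "1 / p" ?S] gap_S by linarith
qed

lemma card_rev_price_gt_le_2:
  assumes \<epsilon>: "0 < \<epsilon>" "\<epsilon> \<le> 1/8" and \<epsilon>_small: "24 * \<epsilon> * 8 ^ n \<le> 1"
  shows "card {i. i < 2 ^ n \<and> 1 - 2 * \<epsilon> < rev_price (value_dist (path_value i)) p} \<le> 2"
proof (rule card_gap_less_le_2)
  have "(8::real) ^ n = 4 ^ n * 2 ^ n"
    by (simp flip: power_mult_distrib)
  then have "6 * \<epsilon> * 4 ^ n \<le> width n / 2"
    using \<epsilon>_small by (simp add: width_def field_simps)
  moreover have "4 * \<epsilon> \<le> 4 * \<epsilon> * 4 ^ n"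
    using \<epsilon> by simp
  ultimately show "2 * \<epsilon> * 4 ^ n + 4 * \<epsilon> \<le> width n / 2"
    by linarith
qed (use rev_price_gt_imp_gap[OF _ \<epsilon>] in auto)

definition split_level :: "nat \<Rightarrow> real \<Rightarrow> nat \<Rightarrow> nat" where
  "split_level L q i = (LEAST d. L \<le> d \<and> (far d (anc d i) q \<or> d = n))"

lemma split_level:
  assumes "L \<le> n"
  shows "L \<le> split_level L q i" "split_level L q i \<le> n"
    "far (split_level L q i) (anc (split_level L q i) i) q \<or> split_level L q i = n"
    "\<And>d. L \<le> d \<Longrightarrow> d < split_level L q i \<Longrightarrow> \<not> far d (anc d i) q"
proof -
  let ?P = "\<lambda>d. L \<le> d \<and> (far d (anc d i) q \<or> d = n)"
  have Pn: "?P n" using assms by simp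
  show "L \<le> split_level L q i" "far (split_level L q i) (anc (split_level L q i) i) q \<or> split_level L q i = n"
    using LeastI[of ?P, OF Pn] unfolding split_level_def by auto
  show "split_level L q i \<le> n"
    using Least_le[of ?P, OF Pn] unfolding split_level_def .
  show "\<not> far d (anc d i) q" if "L \<le> d" "d < split_level L q i" for d
    using not_less_Least[of d ?P] that unfolding split_level_def by auto
qed

lemma path_curve_eq_below_split:
  assumes "L \<le> n" "anc (split_level L q i) j = anc (split_level L q i) i"
  shows "path_curve j q = path_curve i q"
  using split_level(2,3)[OF assms(1), of q i] path_curve_eq_of_far[OF _ _ assms(2)] assms(2)
  by fastforce

lemma card_split_nodes_le_4:
  assumes "L < d" "d \<le> n"
  shows "card (anc d ` {i. i < 2 ^ n \<and> split_level L q i = d}) \<le> 4"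
proof -
  define Near where "Near = {c. c < 2 ^ (d - 1) \<and> \<not> far (d - 1) c q}"
  have "card Near \<le> 2"
    using width_pos[of "d - 1"] by (intro card_gap_less_le_2[where \<delta> = "width (d - 1) / 3" and d = "d - 1" and q = q])
      (auto simp: Near_def far_def)
  have "anc d ` {i. i < 2 ^ n \<and> split_level L q i = d}
      \<subseteq> (\<lambda>c. 2 * c) ` Near \<union> (\<lambda>c. 2 * c + 1) ` Near"
  proof
    fix c
    assume "c \<in> anc d ` {i. i < 2 ^ n \<and> split_level L q i = d}"
    then obtain i where i: "i < 2 ^ n" "split_level L q i = d" "c = anc d i" by blast
    have "anc (d - 1) i = c div 2"
      using anc_anc[of "d - 1" d i] assms i(3) by simp
    moreover have "anc (d - 1) i < 2 ^ (d - 1)" "\<not> far (d - 1) (anc (d - 1) i) q"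
      using anc_less[OF i(1)] split_level(4)[of L "d - 1" q i] i(2) assms by auto
    ultimately have "c div 2 \<in> Near" by (simp add: Near_def)
    moreover have "c = 2 * (c div 2) \<or> c = 2 * (c div 2) + 1" by presburger
    ultimately show "c \<in> (\<lambda>c. 2 * c) ` Near \<union> (\<lambda>c. 2 * c + 1) ` Near" by blast
  qed
  then have "card (anc d ` {i. i < 2 ^ n \<and> split_level L q i = d})
      \<le> card ((\<lambda>c. 2 * c) ` Near \<union> (\<lambda>c. 2 * c + 1) ` Near)"
    by (rule card_mono[rotated]) (simp add: Near_def)
  also have "\<dots> \<le> card Near + card Near"
    by (rule card_Un_le[THEN order_trans]) (intro add_mono card_image_le, simp_all add: Near_def)
  finally show ?thesis using \<open>card Near \<le> 2\<close> by simp
qed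

end


lemma sum_three_halves_power_le:
  "L \<le> n \<Longrightarrow> (\<Sum>d\<in>{Suc L..n}. (3/2::real) ^ (n - d)) \<le> 2 * (3/2) ^ (n - L)"
proof (induction "n - L" arbitrary: L)
  case (Suc m)
  then have L: "Suc L \<le> n" "n - L = Suc (n - Suc L)" by auto
  then have "{Suc L..n} = insert (Suc L) {Suc (Suc L)..n}" by auto
  then have "(\<Sum>d\<in>{Suc L..n}. (3/2::real) ^ (n - d))
      = (3/2) ^ (n - Suc L) + (\<Sum>d\<in>{Suc (Suc L)..n}. (3/2) ^ (n - d))"
    by simp
  also have "\<dots> \<le> (3/2) ^ (n - Suc L) + 2 * (3/2) ^ (n - Suc L)"
    using Suc.hyps L by simp
  finally show ?case using L(2) by simp
qed simp

text \<open>Nearly optimal leaves are counted by induction on the number of remaining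
  queries, over cylinders of leaves that have received identical answers so far.\<close>
locale dyadic_run = dyadic_family +
  fixes Qry :: "real \<Rightarrow> real list \<Rightarrow> real" and Out :: "real \<Rightarrow> real list \<Rightarrow> real"
    and \<omega> :: real and k :: nat and \<epsilon> :: real
  assumes Qry_range: "\<And>w as. Qry w as \<in> {0<..1}"
    and \<epsilon>: "0 < \<epsilon>" "\<epsilon> \<le> 1/8" and \<epsilon>_small: "24 * \<epsilon> * 8 ^ n \<le> 1"
begin

definition ans :: "nat \<Rightarrow> nat \<Rightarrow> real list" where
  "ans i s = answers Qry (value_dist (path_value i)) \<omega> s"
definition good :: "nat \<Rightarrow> bool" where
  "good i \<longleftrightarrow> 1 - 2 * \<epsilon> < rev_price (value_dist (path_value i)) (Out \<omega> (ans i k))"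
definition cyl :: "nat \<Rightarrow> nat \<Rightarrow> nat set" where
  "cyl L c = {i. i < 2 ^ n \<and> anc L i = c}"

lemma finite_cyl [simp]: "finite (cyl L c)"
  unfolding cyl_def by simp

lemma ans_Suc: "i < 2 ^ n \<Longrightarrow> ans i (Suc s) = ans i s @ [path_value i (Qry \<omega> (ans i s))]"
  using value_curve.value_at_value_dist[OF value_curve_path] Qry_range
  by (simp add: ans_def Let_def)

lemma card_good_common_answers:
  assumes "X \<subseteq> {..<2 ^ n}" "\<forall>i\<in>X. \<forall>j\<in>X. ans i k = ans j k"
  shows "card {i \<in> X. good i} \<le> 2"
proof (cases "X = {}")
  case False
  then obtain i0 where "i0 \<in> X" by blast
  let ?p = "Out \<omega> (ans i0 k)"
  have "{i \<in> X. good i} \<subseteq> {i. i < 2 ^ n \<and> 1 - 2 * \<epsilon> < rev_price (value_dist (path_value i)) ?p}"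
  proof
    fix i
    assume i: "i \<in> {i \<in> X. good i}"
    then have "ans i k = ans i0 k" using assms(2) \<open>i0 \<in> X\<close> by blast
    then show "i \<in> {i. i < 2 ^ n \<and> 1 - 2 * \<epsilon> < rev_price (value_dist (path_value i)) ?p}"
      using i assms(1) by (auto simp: good_def)
  qed
  then have "card {i \<in> X. good i}
      \<le> card {i. i < 2 ^ n \<and> 1 - 2 * \<epsilon> < rev_price (value_dist (path_value i)) ?p}"
    by (rule card_mono[rotated]) simp
  also have "\<dots> \<le> 2"
    by (rule card_rev_price_gt_le_2[OF \<epsilon> \<epsilon>_small])
  finally show ?thesis .
qed simp

lemma ans_Suc_eq_on_split_cylinder:
  assumes L: "L \<le> n" and i: "i \<in> cyl L c"
    and j: "j \<in> cyl (split_level L q i) (anc (split_level L q i) i)"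
    and common: "\<forall>a\<in>cyl L c. \<forall>b\<in>cyl L c. ans a s = ans b s" and q: "q = Qry \<omega> (ans i s)"
  shows "ans j (Suc s) = ans i (Suc s)"
proof -
  let ?d = "split_level L q i"
  have d: "L \<le> ?d" "?d \<le> n" using split_level(1,2)[OF L] .
  have anc_j: "anc ?d j = anc ?d i" and "j < 2 ^ n" "i < 2 ^ n"
    using i j by (simp_all add: cyl_def)
  then have "anc L j = anc L i"
    using anc_anc[OF d, of j] anc_anc[OF d, of i] by simp
  then have "j \<in> cyl L c" using i \<open>j < 2 ^ n\<close> by (simp add: cyl_def)
  then have "ans j s = ans i s" using common i by blast
  moreover have "path_value j q = path_value i q"
    using path_curve_eq_below_split[OF L anc_j] by (simp add: path_value_def)
  ultimately show ?thesis
    unfolding ans_Suc[OF \<open>j < 2 ^ n\<close>] ans_Suc[OF \<open>i < 2 ^ n\<close>] using q by simp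
qed

lemma common_answers_on_split_cylinder:
  assumes "L \<le> n" "i \<in> cyl L c" "\<forall>a\<in>cyl L c. \<forall>b\<in>cyl L c. ans a s = ans b s"
    and "q = Qry \<omega> (ans i s)"
  shows "\<forall>a\<in>cyl (split_level L q i) (anc (split_level L q i) i).
    \<forall>b\<in>cyl (split_level L q i) (anc (split_level L q i) i). ans a (Suc s) = ans b (Suc s)"
proof (intro ballI)
  fix a b
  assume "a \<in> cyl (split_level L q i) (anc (split_level L q i) i)"
    "b \<in> cyl (split_level L q i) (anc (split_level L q i) i)"
  then show "ans a (Suc s) = ans b (Suc s)"
    using ans_Suc_eq_on_split_cylinder[OF assms(1,2) _ assms(3,4), of a]
      ans_Suc_eq_on_split_cylinder[OF assms(1,2) _ assms(3,4), of b] by simp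
qed

lemma card_split_nodes_in_cylinder:
  "card (anc L ` {i \<in> cyl L c. split_level L q i = L}) \<le> 1"
  "d \<in> {Suc L..n} \<Longrightarrow> card (anc d ` {i \<in> cyl L c. split_level L q i = d}) \<le> 4"
proof -
  have "anc L ` {i \<in> cyl L c. split_level L q i = L} \<subseteq> {c}"
    by (auto simp: cyl_def)
  then show "card (anc L ` {i \<in> cyl L c. split_level L q i = L}) \<le> 1"
    using card_mono[of "{c}"] by fastforce
  assume "d \<in> {Suc L..n}"
  have "anc d ` {i \<in> cyl L c. split_level L q i = d} \<subseteq> anc d ` {i. i < 2 ^ n \<and> split_level L q i = d}"
    by (auto simp: cyl_def)
  then have "card (anc d ` {i \<in> cyl L c. split_level L q i = d})
      \<le> card (anc d ` {i. i < 2 ^ n \<and> split_level L q i = d})"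
    by (rule card_mono[rotated]) simp
  then show "card (anc d ` {i \<in> cyl L c. split_level L q i = d}) \<le> 4"
    using card_split_nodes_le_4[of L d q] \<open>d \<in> {Suc L..n}\<close> by simp
qed

lemma good_subset_split_cylinders:
  assumes "L \<le> n"
  shows "{i \<in> cyl L c. good i}
    \<subseteq> (\<Union>d\<in>{L..n}. \<Union>c'\<in>anc d ` {i \<in> cyl L c. split_level L q i = d}. {i \<in> cyl d c'. good i})"
proof
  fix i
  assume i: "i \<in> {i \<in> cyl L c. good i}"
  let ?d = "split_level L q i"
  have "?d \<in> {L..n}" "anc ?d i \<in> anc ?d ` {i \<in> cyl L c. split_level L q i = ?d}"
    "i \<in> {i \<in> cyl ?d (anc ?d i). good i}"
    using split_level(1,2)[OF assms] i by (auto simp: cyl_def)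
  then show "i \<in> (\<Union>d\<in>{L..n}. \<Union>c'\<in>anc d ` {i \<in> cyl L c. split_level L q i = d}.
      {i \<in> cyl d c'. good i})"
    by blast
qed

lemma card_good_split:
  assumes L: "L \<le> n" and common: "\<forall>a\<in>cyl L c. \<forall>b\<in>cyl L c. ans a s = ans b s"
    and K: "\<And>d. 0 \<le> K d"
    and IH: "\<And>d c'. L \<le> d \<Longrightarrow> d \<le> n \<Longrightarrow> \<forall>a\<in>cyl d c'. \<forall>b\<in>cyl d c'. ans a (Suc s) = ans b (Suc s)
      \<Longrightarrow> real (card {i \<in> cyl d c'. good i}) \<le> K d"
  shows "real (card {i \<in> cyl L c. good i}) \<le> K L + 4 * (\<Sum>d\<in>{Suc L..n}. K d)"
proof (cases "cyl L c = {}")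
  case False
  then obtain i0 where i0: "i0 \<in> cyl L c" by blast
  define q where "q = Qry \<omega> (ans i0 s)"
  define Z where "Z d = anc d ` {i \<in> cyl L c. split_level L q i = d}" for d
  have q: "q = Qry \<omega> (ans i s)" if "i \<in> cyl L c" for i
  proof -
    have "ans i s = ans i0 s" using common i0 that by blast
    then show ?thesis by (simp add: q_def)
  qed
  have Z_le: "real (card {i \<in> cyl d c'. good i}) \<le> K d" if d: "d \<in> {L..n}" and c': "c' \<in> Z d" for d c'
  proof -
    obtain i where i: "i \<in> cyl L c" "split_level L q i = d" "c' = anc d i"
      using c' unfolding Z_def by blast
    show ?thesis
      using IH[OF _ _ common_answers_on_split_cylinder[OF L i(1) common q[OF i(1)]]] i d by simp
  qed
  have "{i \<in> cyl L c. good i} \<subseteq> (\<Union>d\<in>{L..n}. \<Union>c'\<in>Z d. {i \<in> cyl d c'. good i})"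
    unfolding Z_def by (rule good_subset_split_cylinders[OF L])
  then have "card {i \<in> cyl L c. good i} \<le> card (\<Union>d\<in>{L..n}. \<Union>c'\<in>Z d. {i \<in> cyl d c'. good i})"
    by (rule card_mono[rotated]) (simp add: Z_def)
  also have "\<dots> \<le> (\<Sum>d\<in>{L..n}. card (\<Union>c'\<in>Z d. {i \<in> cyl d c'. good i}))"
    by (rule card_UN_le) simp
  also have "\<dots> \<le> (\<Sum>d\<in>{L..n}. \<Sum>c'\<in>Z d. card {i \<in> cyl d c'. good i})"
    by (intro sum_mono card_UN_le) (simp add: Z_def)
  finally have "real (card {i \<in> cyl L c. good i})
      \<le> (\<Sum>d\<in>{L..n}. \<Sum>c'\<in>Z d. real (card {i \<in> cyl d c'. good i}))"
    by (simp only: of_nat_le_iff flip: of_nat_sum)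
  also have "\<dots> \<le> (\<Sum>d\<in>{L..n}. real (card (Z d)) * K d)"
    using Z_le by (intro sum_mono sum_bounded_above) auto
  also have "\<dots> = real (card (Z L)) * K L + (\<Sum>d\<in>{Suc L..n}. real (card (Z d)) * K d)"
    using L by (simp add: Icc_eq_insert_lb_nat)
  also have "\<dots> \<le> 1 * K L + (\<Sum>d\<in>{Suc L..n}. 4 * K d)"
    using card_split_nodes_in_cylinder K unfolding Z_def by (intro add_mono sum_mono mult_right_mono) auto
  finally show ?thesis by (simp add: sum_distrib_left)
qed (simp add: K sum_nonneg)

lemma card_good_cylinder:
  "s + r = k \<Longrightarrow> L \<le> n \<Longrightarrow> \<forall>a\<in>cyl L c. \<forall>b\<in>cyl L c. ans a s = ans b s \<Longrightarrow>
    real (card {i \<in> cyl L c. good i}) \<le> 2 * 9 ^ r * (3/2) ^ (n - L)"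
proof (induction r arbitrary: s L c)
  case 0
  have "s = k" using "0.prems"(1) by simp
  have "cyl L c \<subseteq> {..<2 ^ n}"
    by (auto simp: cyl_def)
  then have "card {i \<in> cyl L c. good i} \<le> 2"
    using "0.prems"(3) unfolding \<open>s = k\<close> by (rule card_good_common_answers)
  then have "real (card {i \<in> cyl L c. good i}) \<le> 2"
    by simp
  also have "\<dots> \<le> 2 * (3/2) ^ (n - L)"
    using one_le_power[of "3/2::real" "n - L"] by simp
  finally show ?case by simp
next
  case (Suc r)
  let ?K = "\<lambda>d. 2 * 9 ^ r * (3/2::real) ^ (n - d)"
  have "real (card {i \<in> cyl L c. good i}) \<le> ?K L + 4 * (\<Sum>d\<in>{Suc L..n}. ?K d)"
  proof (rule card_good_split[OF Suc.prems(2,3)])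
    show "real (card {i \<in> cyl d c'. good i}) \<le> ?K d"
      if "L \<le> d" "d \<le> n" "\<forall>a\<in>cyl d c'. \<forall>b\<in>cyl d c'. ans a (Suc s) = ans b (Suc s)" for d c'
      using Suc.IH[OF _ that(2,3)] Suc.prems(1) by simp
  qed simp
  also have "(\<Sum>d\<in>{Suc L..n}. ?K d) = 2 * 9 ^ r * (\<Sum>d\<in>{Suc L..n}. (3/2::real) ^ (n - d))"
    by (simp add: sum_distrib_left)
  also have "\<dots> \<le> 2 * 9 ^ r * (2 * (3/2) ^ (n - L))"
    using sum_three_halves_power_le[OF Suc.prems(2)] by (intro mult_left_mono) auto
  finally show ?case by simp
qed

lemma card_good_le: "real (card {i. i < 2 ^ n \<and> good i}) \<le> 2 * 9 ^ k * (3/2) ^ n"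
proof -
  have "cyl 0 0 = {i. i < 2 ^ n}" by (auto simp: cyl_def anc_def)
  moreover have "real (card {i \<in> cyl 0 0. good i}) \<le> 2 * 9 ^ k * (3/2) ^ (n - 0)"
    by (rule card_good_cylinder) (auto simp: ans_def)
  ultimately show ?thesis by simp
qed

end


lemma dyadic_lower_bound:
  assumes Qry: "rand_alg P Qry" and \<epsilon>: "0 < \<epsilon>" "\<epsilon> \<le> 1/8" and \<epsilon>_small: "24 * \<epsilon> * 8 ^ n \<le> 1"
    and guarantee: "\<forall>D. regular_dist D \<longrightarrow> ennreal ((1 - \<epsilon>) * OPT D) \<le> exp_rev P Qry Out k D"
  shows "(4/3::real) ^ n \<le> 4 * 9 ^ k"
proof -
  interpret dyadic_family n .
  interpret R: dyadic_run n Qry Out \<omega> k \<epsilon> for \<omega>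
    using Qry \<epsilon> \<epsilon>_small by unfold_locales (auto simp: rand_alg_def)
  define h where "h \<omega> i = (if R.good \<omega> i then 1 else 1 - 2 * \<epsilon>)" for \<omega> i
  have "real (card {..<(2::nat) ^ n}) * (1 - \<epsilon>) \<le> 2 ^ n * (1 - 2 * \<epsilon>) + 2 * \<epsilon> * (2 * 9 ^ k * (3/2) ^ n)"
  proof (rule yao_averaging[where D = "\<lambda>i. value_dist (path_value i)" and h = h])
    show "prob_space P" using Qry by (simp add: rand_alg_def)
    show "ennreal (1 - \<epsilon>) \<le> exp_rev P Qry Out k (value_dist (path_value i))" if "i \<in> {..<2 ^ n}" for i
    proof -
      have "ennreal (1 - \<epsilon>) \<le> ennreal ((1 - \<epsilon>) * OPT (value_dist (path_value i)))"
        using OPT_path_ge_1[of i] that \<epsilon> by (intro ennreal_leI) (simp add: mult_le_cancel_left1)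
      also have "\<dots> \<le> exp_rev P Qry Out k (value_dist (path_value i))"
        using guarantee regular_path[of i] that by simp
      finally show ?thesis .
    qed
    show "rev_price (value_dist (path_value i)) (Out \<omega> (answers Qry (value_dist (path_value i)) \<omega> k)) \<le> h \<omega> i"
      if "i \<in> {..<2 ^ n}" for \<omega> i
      using rev_price_path_le_1[of i] that by (auto simp: h_def R.good_def R.ans_def)
    show "0 \<le> h \<omega> i" for \<omega> i
      using \<epsilon> by (simp add: h_def)
    show "sum (h \<omega>) {..<2 ^ n} \<le> 2 ^ n * (1 - 2 * \<epsilon>) + 2 * \<epsilon> * (2 * 9 ^ k * (3/2) ^ n)" for \<omega>
    proof -
      have "sum (h \<omega>) {..<2 ^ n} = (\<Sum>i<2 ^ n. (1 - 2 * \<epsilon>) + 2 * \<epsilon> * (if R.good \<omega> i then 1 else 0))"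
        by (intro sum.cong) (auto simp: h_def)
      also have "\<dots> = 2 ^ n * (1 - 2 * \<epsilon>) + 2 * \<epsilon> * real (card {i. i < 2 ^ n \<and> R.good \<omega> i})"
        by (simp add: sum.distrib sum_distrib_left[symmetric] sum.If_cases lessThan_def Collect_conj_eq)
      also have "\<dots> \<le> 2 ^ n * (1 - 2 * \<epsilon>) + 2 * \<epsilon> * (2 * 9 ^ k * (3/2) ^ n)"
        using R.card_good_le[of \<omega>] \<epsilon> by (intro add_left_mono mult_left_mono) auto
      finally show ?thesis .
    qed
  qed (use \<epsilon> in auto)
  then have "2 ^ n * \<epsilon> \<le> \<epsilon> * (4 * 9 ^ k * (3/2) ^ n)"
    by (simp add: algebra_simps)
  then have "(4/3) ^ n * (3/2) ^ n \<le> 4 * 9 ^ k * (3/2::real) ^ n"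
    using \<epsilon> by (simp flip: power_mult_distrib)
  then show ?thesis
    by simp
qed

lemma four_thirds_power_le_imp:
  assumes "(4/3::real) ^ n \<le> 4 * 9 ^ k"
  shows "2/9 * real n \<le> 3 + 8 * real k"
proof -
  have "ln ((4/3::real) ^ n) \<le> ln (4 * 9 ^ k)"
    using assms by (subst ln_le_cancel_iff) auto
  then have "real n * ln (4/3) \<le> ln 4 + real k * ln 9"
    by (simp add: ln_mult ln_realpow)
  moreover have "2/9 \<le> ln (4/3::real)"
    using ln_one_plus_pos_lower_bound[of "1/3::real"] by (simp add: power2_eq_square)
  moreover have "ln (4::real) \<le> 3" "ln (9::real) \<le> 8"
    using ln_le_minus_one[of 4] ln_le_minus_one[of 9] by simp_all
  ultimately show ?thesis
    using mult_left_mono[of "2/9" "ln (4/3)" "real n"] mult_left_mono[of "ln 9" 8 "real k"]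
    by linarith
qed

lemma regular_lower_bound:
  assumes \<epsilon>: "0 < \<epsilon>" "\<epsilon> < exp (-200)" and Qry: "rand_alg P Qry"
    and guarantee: "\<forall>D. regular_dist D \<longrightarrow> ennreal ((1 - \<epsilon>) * OPT D) \<le> exp_rev P Qry Out k D"
  shows "1/216 * ln (1 / \<epsilon>) \<le> real k"
proof -
  define L where "L = ln (1 / \<epsilon>)"
  have "exp 200 < 1 / \<epsilon>"
    using \<epsilon> by (simp add: exp_minus field_simps)
  then have "ln (exp 200) < L"
    unfolding L_def using \<epsilon> by (subst ln_less_cancel_iff) auto
  then have L: "200 < L" by simp
  have "201 \<le> exp (200::real)"
    using exp_ge_add_one_self[of 200] by simp
  then have "\<epsilon> * 201 \<le> \<epsilon> * exp 200"
    using \<epsilon> by (intro mult_left_mono) auto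
  moreover have "\<epsilon> * exp 200 < 1"
    using \<epsilon> by (simp add: exp_minus field_simps)
  ultimately have "\<epsilon> \<le> 1/8"
    by linarith
  define X where "X = ln (1 / (24 * \<epsilon>))"
  have "X = L - ln 24"
    unfolding X_def L_def using \<epsilon> by (simp add: ln_div ln_mult)
  moreover have "ln (24::real) \<le> 23"
    using ln_le_minus_one[of 24] by simp
  ultimately have X: "L - 23 \<le> X" by simp
  define n where "n = nat \<lfloor>X / 3\<rfloor>"
  have n: "real n \<le> X / 3" "X / 3 - 1 \<le> real n"
    using X L unfolding n_def by linarith+
  have ln_2: "ln (2::real) \<le> 1"
    using ln_le_minus_one[of 2] by simp
  have "ln (8::real) = 3 * ln 2"
    using ln_realpow[of 2 3] by simp
  then have "ln ((8::real) ^ n) \<le> real n * 3"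
    using mult_left_mono[OF ln_2, of "real n"] by (simp add: ln_realpow)
  then have "ln ((8::real) ^ n) \<le> X"
    using n by linarith
  then have "(8::real) ^ n \<le> 1 / (24 * \<epsilon>)"
    unfolding X_def using \<epsilon> by (subst (asm) ln_le_cancel_iff) auto
  then have "(4/3::real) ^ n \<le> 4 * 9 ^ k"
    using \<epsilon> \<open>\<epsilon> \<le> 1/8\<close> by (intro dyadic_lower_bound[OF Qry _ _ _ guarantee]) (auto simp: field_simps)
  then have "2/9 * real n \<le> 3 + 8 * real k"
    by (rule four_thirds_power_le_imp)
  then show ?thesis
    using n X L unfolding L_def[symmetric] by linarith
qed

theorem mainTheorem11:
  shows
  "(\<exists>c>0. \<exists>\<epsilon>0>0. \<forall>\<epsilon>. 0 < \<epsilon> \<and> \<epsilon> < \<epsilon>0 \<longrightarrow>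
      (\<forall>P Qry Out k. rand_alg P Qry \<and>
          (\<forall>D. regular_dist D \<longrightarrow> exp_rev P Qry Out k D \<ge> ennreal ((1 - \<epsilon>) * OPT D))
        \<longrightarrow> real k \<ge> c * ln (1 / \<epsilon>)))
 \<and> (\<exists>c>0. \<exists>\<epsilon>0>0. \<forall>\<epsilon>. 0 < \<epsilon> \<and> \<epsilon> < \<epsilon>0 \<longrightarrow>
      (\<forall>P Qry Out k. rand_alg P Qry \<and>
          (\<forall>D. bounded_dist 0 1 D \<longrightarrow> exp_rev P Qry Out k D \<ge> ennreal (OPT D - \<epsilon>))
        \<longrightarrow> real k \<ge> c / \<epsilon>))
 \<and> (\<exists>c>0. \<exists>\<epsilon>0>0. \<forall>\<epsilon> H. 0 < \<epsilon> \<and> \<epsilon> < \<epsilon>0 \<and> 2 \<le> H \<longrightarrow>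
      (\<forall>P Qry Out k. rand_alg P Qry \<and>
          (\<forall>D. bounded_dist 1 H D \<longrightarrow> exp_rev P Qry Out k D \<ge> ennreal ((1 - \<epsilon>) * OPT D))
        \<longrightarrow> real k \<ge> c * ln H / \<epsilon>))"
  apply (intro conjI)
  subgoal
    by (intro exI[of _ "1/216"] exI[of _ "exp (-200)"] conjI allI impI; (simp; fail)?)
      (blast intro: regular_lower_bound)
  subgoal
    by (intro exI[of _ "1/40"] exI[of _ "1/100"] conjI allI impI; (simp; fail)?)
      (blast intro: bounded_additive_lower_bound)
  subgoal
    by (intro exI[of _ "1/24"] exI[of _ "1/100"] conjI allI impI; (simp; fail)?)
      (blast intro: bounded_multiplicative_lower_bound)
  done

end
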